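(* Let $s\in\mathbb{N}$, let $B$ be a Banach space of real functions on $[0,1]^s$ with norm $\|\cdot\|_B$, and let $S$ be a collection of finite multisets of points in $[0,1]^s$ equipped with a probability distribution, $P$ denoting a random element of $S$. Suppose $\epsilon>0$ and $\delta\in(0,1)$ satisfy \[\Pr\left[e^{\mathrm{wor}}(Q_P;B)\le\epsilon\right]\ge1-\delta.\] Let $r$ be an odd positive integer and let $P_1,\ldots,P_r$ be drawn independently from $S$ according to the same distribution. Then \[\Pr\left[e^{\mathrm{wor}}(M_r;B)\le\epsilon\right]\ge1-\binom{r}{(r+1)/2}\delta^{(r+1)/2}.\]
   Context: For a finite multiset $P\subset[0,1]^s$ with $N=|P|$, $Q_P(f)=\frac1N\sum_{\boldsymbol x\in P}f(\boldsymbol x)$ and $I_s(f)=\int_{[0,1]^s}f(\boldsymbol x)\,\mathrm d\boldsymbol x$. The median rule is $M_r(f)=\mathrm{median}(Q_{P_1}(f),\ldots,Q_{P_r}(f))$. For a (deterministic, given realization) rule $A$, the worst-case error is $e^{\mathrm{wor}}(A;B)=\sup_{f\in B,\|f\|_B\le1}|A(f)-I_s(f)|$. *)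

theory Defs
  imports "HOL-Probability.Probability" "HOL-Library.Multiset"
begin

text \<open>The unit cube [0,1]^s, with s = CARD('n).\<close>
definition unit_cube :: "(real ^ 'n) set" where
  "unit_cube = {x. \<forall>i. 0 \<le> x $ i \<and> x $ i \<le> 1}"

text \<open>B is a real Banach space of functions on the unit cube with norm nb.
  Functions are represented extensionally: they vanish outside the cube.\<close>
definition banach_fun_space :: "(real ^ 'n \<Rightarrow> real) set \<Rightarrow> ((real ^ 'n \<Rightarrow> real) \<Rightarrow> real) \<Rightarrow> bool" where
  "banach_fun_space B nb \<longleftrightarrow>
     (\<forall>f\<in>B. \<forall>x. x \<notin> unit_cube \<longrightarrow> f x = 0) \<and>
     (\<lambda>x. 0) \<in> B \<and>
     (\<forall>f\<in>B. \<forall>g\<in>B. (\<lambda>x. f x + g x) \<in> B) \<and>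
     (\<forall>c::real. \<forall>f\<in>B. (\<lambda>x. c * f x) \<in> B) \<and>
     (\<forall>f\<in>B. 0 \<le> nb f) \<and>
     (\<forall>f\<in>B. nb f = 0 \<longleftrightarrow> f = (\<lambda>x. 0)) \<and>
     (\<forall>c::real. \<forall>f\<in>B. nb (\<lambda>x. c * f x) = \<bar>c\<bar> * nb f) \<and>
     (\<forall>f\<in>B. \<forall>g\<in>B. nb (\<lambda>x. f x + g x) \<le> nb f + nb g) \<and>
     (\<forall>u :: nat \<Rightarrow> (real ^ 'n \<Rightarrow> real).
        (\<forall>k. u k \<in> B) \<and>
        (\<forall>e>0. \<exists>K. \<forall>m\<ge>K. \<forall>n\<ge>K. nb (\<lambda>x. u m x - u n x) < e)
        \<longrightarrow> (\<exists>g\<in>B. (\<lambda>k. nb (\<lambda>x. u k x - g x)) \<longlonglongrightarrow> 0))"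

definition Q_rule :: "(real ^ 'n) multiset \<Rightarrow> (real ^ 'n \<Rightarrow> real) \<Rightarrow> real" where
  "Q_rule P f = (\<Sum>\<^sub># (image_mset f P)) / real (size P)"

definition I_s :: "(real ^ 'n \<Rightarrow> real) \<Rightarrow> real" where
  "I_s f = integral unit_cube f"

definition median_list :: "real list \<Rightarrow> real" where
  "median_list xs = sort xs ! (length xs div 2)"

definition median_rule :: "nat \<Rightarrow> (nat \<Rightarrow> (real ^ 'n) multiset) \<Rightarrow> (real ^ 'n \<Rightarrow> real) \<Rightarrow> real" where
  "median_rule r Ps f = median_list (map (\<lambda>i. Q_rule (Ps i) f) [0..<r])"

definition e_wor :: "((real ^ 'n \<Rightarrow> real) \<Rightarrow> real) \<Rightarrow> (real ^ 'n \<Rightarrow> real) set \<Rightarrow> ((real ^ 'n \<Rightarrow> real) \<Rightarrow> real) \<Rightarrow> ereal" where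
  "e_wor A B nb = (SUP f\<in>{f\<in>B. nb f \<le> 1}. ereal \<bar>A f - I_s f\<bar>)"

end

theory Submission
  imports Defs
begin

(* If fewer than (r + 1)/2 of the rules Q_{P_i} have worst-case error above \<epsilon>, then for every f
   in the unit ball of B a majority of the values Q_{P_i}(f) lies within \<epsilon> of I_s(f), hence so
   does their median, and e_wor(M_r) \<le> \<epsilon>. The draws with at least k = (r + 1)/2 failing rules
   form the union, over the (r choose k) index sets S of size k, of the events "P_i fails for
   every i \<in> S", each of probability at most \<delta>^k by independence; a union bound concludes. *)

lemma length_filter_mono:
  assumes "\<And>x. P x \<Longrightarrow> Q x"
  shows "length (filter P xs) \<le> length (filter Q xs)"
  using assms by (induction xs) auto

lemma length_filter_upt:
  "length (filter P [0..<n]) = card {i. i < n \<and> P i}"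
proof -
  have "set (filter P [0..<n]) = {i. i < n \<and> P i}"
    by auto
  then show ?thesis
    by (metis distinct_card distinct_filter distinct_upt)
qed

lemma sorted_nth_le_if_length_filter_gt:
  fixes ys :: "'a::linorder list"
  assumes "sorted ys" and "i < length (filter (\<lambda>y. y \<le> a) ys)"
  shows "ys ! i \<le> a"
proof (rule ccontr)
  assume "\<not> ys ! i \<le> a"
  then have "j < i" if "j < length ys" and "ys ! j \<le> a" for j
    using sorted_nth_mono[OF assms(1), of i j] that by (meson leI order_trans)
  then have "{j. j < length ys \<and> ys ! j \<le> a} \<subseteq> {..<i}"
    by blast
  then have "length (filter (\<lambda>y. y \<le> a) ys) \<le> i"
    unfolding length_filter_conv_card by (metis card_lessThan card_mono finite_lessThan)
  then show False
    using assms(2) by simp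
qed

lemma sorted_nth_ge_if_length_filter_ge:
  fixes ys :: "'a::linorder list"
  assumes "sorted ys" and "i < length ys"
    and "length ys - i \<le> length (filter (\<lambda>y. a \<le> y) ys)"
  shows "a \<le> ys ! i"
proof (rule ccontr)
  assume "\<not> a \<le> ys ! i"
  then have "i < j" if "j < length ys" and "a \<le> ys ! j" for j
    using sorted_nth_mono[OF assms(1), of j i] that assms(2) by (meson leI order_trans)
  then have "{j. j < length ys \<and> a \<le> ys ! j} \<subseteq> {i<..<length ys}"
    by auto
  then have "length (filter (\<lambda>y. a \<le> y) ys) \<le> length ys - Suc i"
    unfolding length_filter_conv_card
    by (metis card_greaterThanLessThan card_mono finite_greaterThanLessThan)
  then show False
    using assms(2,3) by simp
qed

lemma median_list_le:
  assumes "odd (length xs)"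
    and "(length xs + 1) div 2 \<le> length (filter (\<lambda>x. x \<le> a) xs)"
  shows "median_list xs \<le> a"
  unfolding median_list_def
proof (rule sorted_nth_le_if_length_filter_gt)
  have "length xs div 2 < (length xs + 1) div 2"
    using assms(1) by (auto elim: oddE)
  then show "length xs div 2 < length (filter (\<lambda>x. x \<le> a) (sort xs))"
    using assms(2) by (simp add: filter_sort)
qed simp

lemma median_list_ge:
  assumes "odd (length xs)"
    and "(length xs + 1) div 2 \<le> length (filter (\<lambda>x. a \<le> x) xs)"
  shows "a \<le> median_list xs"
  unfolding median_list_def
proof (rule sorted_nth_ge_if_length_filter_ge)
  have "length xs - length xs div 2 = (length xs + 1) div 2"
    using assms(1) by (auto elim: oddE)
  then show "length (sort xs) - length xs div 2 \<le> length (filter (\<lambda>x. a \<le> x) (sort xs))"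
    using assms(2) by (simp add: filter_sort)
  show "length xs div 2 < length (sort xs)"
    using assms(1) by (auto elim: oddE)
qed simp

lemma median_list_close:
  assumes "odd (length xs)"
    and "(length xs + 1) div 2 \<le> length (filter (\<lambda>x. \<bar>x - c\<bar> \<le> e) xs)"
  shows "\<bar>median_list xs - c\<bar> \<le> e"
proof -
  have "median_list xs \<le> c + e"
    using assms(1) le_trans[OF assms(2) length_filter_mono[of _ "\<lambda>x. x \<le> c + e"]]
    by (intro median_list_le) auto
  moreover have "c - e \<le> median_list xs"
    using assms(1) le_trans[OF assms(2) length_filter_mono[of _ "\<lambda>x. c - e \<le> x"]]
    by (intro median_list_ge) auto
  ultimately show ?thesis
    by linarith
qed

lemma at_least_k_coordinates_in_eq_Union_PiE:
  assumes "finite I" and "A \<subseteq> space M"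
  shows "{x \<in> space (PiM I (\<lambda>_. M)). k \<le> card {i \<in> I. x i \<in> A}}
    = (\<Union>S \<in> {S. S \<subseteq> I \<and> card S = k}. PiE I (\<lambda>i. if i \<in> S then A else space M))"
    (is "?L = ?R")
proof
  show "?L \<subseteq> ?R"
  proof
    fix x assume x: "x \<in> ?L"
    then have "k \<le> card {i \<in> I. x i \<in> A}"
      by simp
    then obtain S where S: "S \<subseteq> {i \<in> I. x i \<in> A}" and "card S = k"
      by (metis obtain_subset_with_card_n)
    have "x \<in> PiE I (\<lambda>i. if i \<in> S then A else space M)"
      using x S by (auto simp: space_PiM PiE_iff)
    with S \<open>card S = k\<close> show "x \<in> ?R"
      by blast
  qed
  show "?R \<subseteq> ?L"
  proof
    fix x assume "x \<in> ?R"
    then obtain S where S: "S \<subseteq> I" "card S = k"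
      and x: "x \<in> PiE I (\<lambda>i. if i \<in> S then A else space M)"
      by blast
    have "S \<subseteq> {i \<in> I. x i \<in> A}"
    proof
      fix i assume "i \<in> S"
      then show "i \<in> {i \<in> I. x i \<in> A}"
        using S(1) PiE_mem[OF x, of i] by auto
    qed
    then have "card S \<le> card {i \<in> I. x i \<in> A}"
      using assms(1) by (intro card_mono) auto
    then have "k \<le> card {i \<in> I. x i \<in> A}"
      using S(2) by simp
    moreover have "PiE I (\<lambda>i. if i \<in> S then A else space M) \<subseteq> space (PiM I (\<lambda>_. M))"
      unfolding space_PiM using assms(2) by (intro PiE_mono) auto
    ultimately show "x \<in> ?L"
      using x by blast
  qed
qed

lemma measure_PiM_PiE_if:
  assumes "prob_space M" and "finite I" and "S \<subseteq> I" and "A \<in> sets M"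
  shows "measure (PiM I (\<lambda>_. M)) (PiE I (\<lambda>i. if i \<in> S then A else space M))
    = measure M A ^ card S"
proof -
  interpret M: prob_space M by fact
  interpret finite_product_prob_space "\<lambda>_. M" I
    by unfold_locales (auto simp: assms(2) M.sigma_finite_measure_axioms M.prob_space_axioms)
  have "measure (PiM I (\<lambda>_. M)) (PiE I (\<lambda>i. if i \<in> S then A else space M))
      = (\<Prod>i\<in>I. measure M (if i \<in> S then A else space M))"
    using assms(4) by (intro prob_times) simp
  also have "\<dots> = (\<Prod>i\<in>I. if i \<in> S then measure M A else 1)"
    by (intro prod.cong) (auto simp: M.prob_space)
  also have "\<dots> = measure M A ^ card S"
    using assms(2,3) by (simp add: prod.If_cases Int_absorb1)
  finally show ?thesis .
qed

lemma measure_PiM_at_least_k_coordinates_in_le: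
  fixes M :: "'a measure" and I :: "'i set" and k :: nat
  assumes "prob_space M" and "finite I" and "A \<in> sets M"
  defines "E \<equiv> {x \<in> space (PiM I (\<lambda>_. M)). k \<le> card {i \<in> I. x i \<in> A}}"
  shows "E \<in> sets (PiM I (\<lambda>_. M))"
    and "measure (PiM I (\<lambda>_. M)) E \<le> real (card I choose k) * measure M A ^ k"
proof -
  interpret P: prob_space "PiM I (\<lambda>_. M)"
    using assms(1) by (intro prob_space_PiM)
  define F where "F S = PiE I (\<lambda>i. if i \<in> S then A else space M)" for S
  define SS where "SS = {S. S \<subseteq> I \<and> card S = k}"
  have E_eq: "E = (\<Union>S \<in> SS. F S)"
    unfolding E_def F_def SS_def
    using assms(2) sets.sets_into_space[OF assms(3)] by (rule at_least_k_coordinates_in_eq_Union_PiE)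
  have F_sets: "F S \<in> sets (PiM I (\<lambda>_. M))" for S
    unfolding F_def using assms(2,3) by (intro sets_PiM_I_finite) auto
  have "finite SS"
    using assms(2) by (simp add: SS_def)
  then show "E \<in> sets (PiM I (\<lambda>_. M))"
    using F_sets unfolding E_eq by blast
  have "measure (PiM I (\<lambda>_. M)) E \<le> (\<Sum>S\<in>SS. measure (PiM I (\<lambda>_. M)) (F S))"
    unfolding E_eq using \<open>finite SS\<close> F_sets by (intro P.finite_measure_subadditive_finite) auto
  also have "\<dots> = (\<Sum>S\<in>SS. measure M A ^ k)"
    using assms(1-3) by (intro sum.cong) (auto simp: F_def SS_def measure_PiM_PiE_if)
  also have "\<dots> = real (card I choose k) * measure M A ^ k"
    using assms(2) by (simp add: SS_def n_subsets)
  finally show "measure (PiM I (\<lambda>_. M)) E \<le> real (card I choose k) * measure M A ^ k" .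
qed

lemma measure_PiM_few_coordinates_outside_ge:
  fixes M :: "'a measure" and I :: "'i set" and k :: nat
  assumes "prob_space M" and "finite I" and "G \<in> sets M" and "1 - \<delta> \<le> measure M G"
  defines "E \<equiv> {x \<in> space (PiM I (\<lambda>_. M)). card {i \<in> I. x i \<notin> G} < k}"
  shows "E \<in> sets (PiM I (\<lambda>_. M))"
    and "1 - real (card I choose k) * \<delta> ^ k \<le> measure (PiM I (\<lambda>_. M)) E"
proof -
  interpret M: prob_space M by fact
  interpret P: prob_space "PiM I (\<lambda>_. M)"
    using assms(1) by (intro prob_space_PiM)
  let ?many = "{x \<in> space (PiM I (\<lambda>_. M)). k \<le> card {i \<in> I. x i \<in> space M - G}}"
  note many = measure_PiM_at_least_k_coordinates_in_le[OF assms(1,2) sets.compl_sets[OF assms(3)],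
      where k = k]
  have "{i \<in> I. x i \<notin> G} = {i \<in> I. x i \<in> space M - G}" if "x \<in> space (PiM I (\<lambda>_. M))" for x
    using that by (auto simp: space_PiM)
  then have E_eq: "E = space (PiM I (\<lambda>_. M)) - ?many"
    unfolding E_def by (auto simp: not_le)
  then show "E \<in> sets (PiM I (\<lambda>_. M))"
    using many(1) by blast
  have "measure M (space M - G) \<le> \<delta>"
    using assms(4) M.prob_compl[OF assms(3)] by linarith
  then have "measure (PiM I (\<lambda>_. M)) ?many \<le> real (card I choose k) * \<delta> ^ k"
    using order_trans[OF many(2)] by (simp add: mult_left_mono power_mono)
  then show "1 - real (card I choose k) * \<delta> ^ k \<le> measure (PiM I (\<lambda>_. M)) E"
    unfolding E_eq using P.prob_compl[OF many(1)] by linarith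
qed

lemma abs_error_le_e_wor:
  assumes "f \<in> B" and "nb f \<le> 1"
  shows "ereal \<bar>A f - I_s f\<bar> \<le> e_wor A B nb"
  unfolding e_wor_def using assms by (intro SUP_upper) auto

lemma e_wor_median_rule_le:
  assumes "odd r"
    and "card {i. i < r \<and> \<not> e_wor (Q_rule (Ps i)) B nb \<le> ereal \<epsilon>} < (r + 1) div 2"
  shows "e_wor (median_rule r Ps) B nb \<le> ereal \<epsilon>"
  unfolding e_wor_def
proof (rule SUP_least)
  let ?good = "\<lambda>i. e_wor (Q_rule (Ps i)) B nb \<le> ereal \<epsilon>"
  have "card {i. i < r \<and> ?good i} + card {i. i < r \<and> \<not> ?good i} = r"
    using sum_length_filter_compl[of ?good "[0..<r]"] by (simp add: length_filter_upt)
  then have majority: "(r + 1) div 2 \<le> card {i. i < r \<and> ?good i}"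
    using assms by (auto elim!: oddE)
  fix f assume "f \<in> {f \<in> B. nb f \<le> 1}"
  then have "\<bar>Q_rule (Ps i) f - I_s f\<bar> \<le> \<epsilon>" if "?good i" for i
    using order_trans[OF abs_error_le_e_wor[of f B nb "Q_rule (Ps i)"] that] by simp
  then have "card {i. i < r \<and> ?good i} \<le> card {i. i < r \<and> \<bar>Q_rule (Ps i) f - I_s f\<bar> \<le> \<epsilon>}"
    by (intro card_mono) auto
  then have "\<bar>median_list (map (\<lambda>i. Q_rule (Ps i) f) [0..<r]) - I_s f\<bar> \<le> \<epsilon>"
    using assms(1) majority by (intro median_list_close) (auto simp: length_filter_upt)
  then show "ereal \<bar>median_rule r Ps f - I_s f\<bar> \<le> ereal \<epsilon>"
    by (simp add: median_rule_def)
qed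

theorem proposition3p2:
  fixes B :: "(real ^ 'n \<Rightarrow> real) set"
    and nb :: "(real ^ 'n \<Rightarrow> real) \<Rightarrow> real"
    and M :: "(real ^ 'n) multiset measure"
    and \<epsilon> \<delta> :: real and r :: nat
  assumes "banach_fun_space B nb"
    and "prob_space M"
    and "space M \<subseteq> {P. set_mset P \<subseteq> unit_cube}"
    and "\<epsilon> > 0" and "0 < \<delta>" and "\<delta> < 1"
    and "{P \<in> space M. e_wor (Q_rule P) B nb \<le> ereal \<epsilon>} \<in> sets M"
    and "measure M {P \<in> space M. e_wor (Q_rule P) B nb \<le> ereal \<epsilon>} \<ge> 1 - \<delta>"
    and "odd r"
  shows "\<exists>A \<in> sets (PiM {..<r} (\<lambda>_. M)).
           A \<subseteq> {Ps \<in> space (PiM {..<r} (\<lambda>_. M)). e_wor (median_rule r Ps) B nb \<le> ereal \<epsilon>} \<and>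
           measure (PiM {..<r} (\<lambda>_. M)) A
             \<ge> 1 - real (r choose ((r + 1) div 2)) * \<delta> ^ ((r + 1) div 2)"
proof -
  define G where "G = {P \<in> space M. e_wor (Q_rule P) B nb \<le> ereal \<epsilon>}"
  define good_draws where "good_draws =
    {Ps \<in> space (PiM {..<r} (\<lambda>_. M)). card {i \<in> {..<r}. Ps i \<notin> G} < (r + 1) div 2}"
  note good_draws = measure_PiM_few_coordinates_outside_ge[OF assms(2) finite_lessThan[of r]
      assms(7,8)[folded G_def], where k = "(r + 1) div 2", folded good_draws_def, unfolded card_lessThan]
  have "e_wor (median_rule r Ps) B nb \<le> ereal \<epsilon>" if "Ps \<in> good_draws" for Ps
  proof (rule e_wor_median_rule_le[OF assms(9)])
    have "{i. i < r \<and> \<not> e_wor (Q_rule (Ps i)) B nb \<le> ereal \<epsilon>} \<subseteq> {i \<in> {..<r}. Ps i \<notin> G}"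
      by (auto simp: G_def)
    then have "card {i. i < r \<and> \<not> e_wor (Q_rule (Ps i)) B nb \<le> ereal \<epsilon>}
        \<le> card {i \<in> {..<r}. Ps i \<notin> G}"
      by (intro card_mono) auto
    with that show "card {i. i < r \<and> \<not> e_wor (Q_rule (Ps i)) B nb \<le> ereal \<epsilon>} < (r + 1) div 2"
      by (simp add: good_draws_def)
  qed
  then have "good_draws
      \<subseteq> {Ps \<in> space (PiM {..<r} (\<lambda>_. M)). e_wor (median_rule r Ps) B nb \<le> ereal \<epsilon>}"
    by (auto simp: good_draws_def)
  with good_draws show ?thesis
    by blast
qed

end
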